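(* Let $a<b$, $n\ge 1$, and let $\{(\tau_k,\omega_k)\}_{k=1}^{2n+1}$ be the nodes and weights of the Gaussian quadrature rule for $S^n_{5,1}$ on the uniform knot sequence $x_k=a+k(b-a)/n$. Then for every $f\in C^6[a,b]$ there is $\xi\in[a,b]$ such that $$\int_a^b f(t)\,dt-\sum_{k=1}^{2n+1}\omega_k f(\tau_k)=c_{2n+1,6}\,f^{(6)}(\xi),\qquad c_{2n+1,6}=\frac{(b-a)^7}{5040}-\frac1{720}\sum_{k=1}^{2n+1}\omega_k(\tau_k-a)^6,$$ and $c_{2n+1,6}>0$.
   Context: $S^n_{5,1}=\{f\in C^1[a,b]:\ f|_{(x_{k-1},x_k)}\text{ is a polynomial of degree}\le 5,\ k=1,\dots,n\}$. A Gaussian quadrature rule for $S^n_{5,1}$ is a rule with $2n+1$ distinct nodes in $[a,b]$ and positive weights that integrates every $f\in S^n_{5,1}$ exactly over $[a,b]$ ($2n+1$ being the minimal possible number of nodes). *)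

theory Defs
  imports "HOL-Analysis.Analysis" "HOL-Computational_Algebra.Polynomial"
begin

definition uknot :: "real \<Rightarrow> real \<Rightarrow> nat \<Rightarrow> nat \<Rightarrow> real" where
  "uknot a b n k = a + real k * (b - a) / real n"

definition C1_on_interval :: "real \<Rightarrow> real \<Rightarrow> (real \<Rightarrow> real) \<Rightarrow> bool" where
  "C1_on_interval a b f \<longleftrightarrow>
     (\<exists>f'. (\<forall>x\<in>{a..b}. (f has_real_derivative f' x) (at x within {a..b}))
          \<and> continuous_on {a..b} f')"

definition spline51 :: "real \<Rightarrow> real \<Rightarrow> nat \<Rightarrow> (real \<Rightarrow> real) set" where
  "spline51 a b n = {f. C1_on_interval a b f \<and>
     (\<forall>k\<in>{1..n}. \<exists>p :: real poly. degree p \<le> 5 \<and>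
        (\<forall>x\<in>{uknot a b n (k - 1)<..<uknot a b n k}. f x = poly p x))}"

definition gaussian_rule51 ::
  "real \<Rightarrow> real \<Rightarrow> nat \<Rightarrow> (nat \<Rightarrow> real) \<Rightarrow> (nat \<Rightarrow> real) \<Rightarrow> bool" where
  "gaussian_rule51 a b n \<tau> \<omega> \<longleftrightarrow>
     inj_on \<tau> {1..2*n+1} \<and>
     (\<forall>k\<in>{1..2*n+1}. \<tau> k \<in> {a..b} \<and> \<omega> k > 0) \<and>
     (\<forall>f\<in>spline51 a b n. integral {a..b} f = (\<Sum>k=1..2*n+1. \<omega> k * f (\<tau> k)))"

definition Cm_derivs :: "nat \<Rightarrow> real \<Rightarrow> real \<Rightarrow> (real \<Rightarrow> real) \<Rightarrow> (nat \<Rightarrow> real \<Rightarrow> real) \<Rightarrow> bool" where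
  "Cm_derivs m a b f D \<longleftrightarrow> D 0 = f \<and>
     (\<forall>j<m. \<forall>x\<in>{a..b}. (D j has_real_derivative D (Suc j) x) (at x within {a..b})) \<and>
     continuous_on {a..b} (D m)"

end

theory Submission
  imports Defs
begin

text \<open>
  The error functional E f = integral_a^b f - sum_k omega_k f(tau_k) annihilates the polynomials
  of degree at most 5, so by Peano's theorem E f = (1/5!) integral K_5(t) f^(6)(t) dt with
  the Peano kernels K_m(t) = E[(x - t)_+^m], which satisfy K_m' = -m K_(m-1). If K_5 >= 0 and
  K_5 is not identically zero, the mean value theorem for integrals gives the claim with
  c = E[(x - a)^6 / 6!] = (integral K_5) / 5! > 0.

  Exactness on the spline space makes K_5, K_4, K_3, K_2 vanish at all n + 1 knots and K_1 at
  a and b. Rolle's theorem, applied four times while keeping the knot zeros, yields 4n + 2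
  zeros of K_1 = (b - t)^2/2 - sum_k omega_k (tau_k - t)_+. Between consecutive nodes K_1 is a
  quadratic with leading coefficient 1/2, so with 2n + 1 nodes it has at most 4n + 2 zeros.
  The count is therefore extremal: no node lies at a, K_5 has no zeros in (a, b) other than
  the knots, and K_1 does not vanish at the interior knots. Hence K_5 = (t - a)^6/6 > 0 just
  right of a, and K_5 keeps its sign across every interior knot, where it has a zero of
  exact order four.
\<close>

lemma DERIV_power_over_fact:
  "((\<lambda>x. (x - c) ^ Suc k / fact (Suc k)) has_real_derivative (x - c) ^ k / fact k) (at x within S)"
proof -
  have "((\<lambda>x. x - c) has_real_derivative 1) (at x within S)"
    by (auto intro!: derivative_eq_intros)
  then have "((\<lambda>x. (x - c) ^ Suc k / fact (Suc k)) has_real_derivative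
               real (Suc k) * (x - c) ^ (Suc k - Suc 0) * 1 / fact (Suc k)) (at x within S)"
    by (intro DERIV_cdivide DERIV_chain2[OF DERIV_pow])
  then show ?thesis by (simp del: of_nat_Suc)
qed

lemma integral_power_shift:
  assumes "a \<le> b"
  shows "integral {a..b} (\<lambda>x. (x - c) ^ m) = ((b - c) ^ Suc m - (a - c) ^ Suc m) / Suc m"
proof -
  have "((\<lambda>x. x - c) has_real_derivative 1) (at x within {a..b})" for x
    by (auto intro!: derivative_eq_intros)
  then have "((\<lambda>x. (x - c) ^ Suc m / Suc m) has_real_derivative
               real (Suc m) * (x - c) ^ (Suc m - Suc 0) * 1 / Suc m) (at x within {a..b})" for x
    by (intro DERIV_cdivide DERIV_chain2[OF DERIV_pow])
  then have "((\<lambda>x. (x - c) ^ m) has_integral (b - c) ^ Suc m / Suc m - (a - c) ^ Suc m / Suc m) {a..b}"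
    using assms
    by (intro fundamental_theorem_of_calculus[where f="\<lambda>x. (x - c) ^ Suc m / Suc m"])
      (auto simp: has_real_derivative_iff_has_vector_derivative simp del: of_nat_Suc)
  then show ?thesis by (simp add: integral_unique diff_divide_distrib)
qed

lemma Cm_derivs_monomial:
  "Cm_derivs m a b (\<lambda>x. (x - c) ^ m / fact m) (\<lambda>j x. (x - c) ^ (m - j) / fact (m - j))"
  unfolding Cm_derivs_def
proof (intro conjI allI impI ballI)
  fix j x assume "j < m"
  then show "((\<lambda>x. (x - c) ^ (m - j) / fact (m - j)) has_real_derivative
               (x - c) ^ (m - Suc j) / fact (m - Suc j)) (at x within {a..b})"
    using DERIV_power_over_fact[of c "m - Suc j"] by (simp add: Suc_diff_Suc)
qed (auto intro!: continuous_intros)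

lemma integral_weighted_mean_value:
  fixes w g :: "real \<Rightarrow> real"
  assumes "a \<le> b" and w: "continuous_on {a..b} w" "\<And>t. t \<in> {a..b} \<Longrightarrow> 0 \<le> w t"
    and g: "continuous_on {a..b} g"
  shows "\<exists>\<xi>\<in>{a..b}. integral {a..b} (\<lambda>t. w t * g t) = integral {a..b} w * g \<xi>"
proof -
  obtain lo where lo: "lo \<in> {a..b}" "\<And>t. t \<in> {a..b} \<Longrightarrow> g lo \<le> g t"
    using continuous_attains_inf[OF compact_Icc _ g] assms by auto
  obtain hi where hi: "hi \<in> {a..b}" "\<And>t. t \<in> {a..b} \<Longrightarrow> g t \<le> g hi"
    using continuous_attains_sup[OF compact_Icc _ g] assms by auto
  have int: "(\<lambda>t. w t * c) integrable_on {a..b}" "(\<lambda>t. w t * g t) integrable_on {a..b}" for c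
    by (intro integrable_continuous_real continuous_intros w g)+
  have lower: "integral {a..b} w * g lo \<le> integral {a..b} (\<lambda>t. w t * g t)"
    using integral_le[OF int(1) int(2), of "g lo"] lo w(2) by (simp add: mult_left_mono)
  have upper: "integral {a..b} (\<lambda>t. w t * g t) \<le> integral {a..b} w * g hi"
    using integral_le[OF int(2) int(1), of "g hi"] hi w(2) by (simp add: mult_left_mono)
  have "0 \<le> integral {a..b} w"
    using w by (intro integral_nonneg integrable_continuous_real) auto
  then consider "integral {a..b} w = 0" | "0 < integral {a..b} w" by linarith
  then show ?thesis
  proof cases
    case 1
    then show ?thesis using lower upper assms(1) by (intro bexI[of _ a]) auto
  next
    case 2
    define v where "v = integral {a..b} (\<lambda>t. w t * g t) / integral {a..b} w"
    have "g lo \<le> v" "v \<le> g hi"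
      using lower upper 2 by (auto simp: v_def field_simps)
    moreover have "connected (g ` {a..b})"
      by (intro connected_continuous_image g connected_Icc)
    ultimately have "v \<in> g ` {a..b}"
      using lo hi unfolding connected_iff_interval by blast
    then show ?thesis using 2 by (auto simp: v_def field_simps)
  qed
qed

lemma connected_nonvanishing_pos:
  fixes g :: "'a::topological_space \<Rightarrow> real"
  assumes "connected S" "continuous_on S g" "\<And>x. x \<in> S \<Longrightarrow> g x \<noteq> 0"
    and "p \<in> S" "0 < g p" "x \<in> S"
  shows "0 < g x"
proof (rule ccontr)
  assume "\<not> 0 < g x"
  then have "g x \<le> 0" by simp
  moreover have "connected (g ` S)"
    using assms by (intro connected_continuous_image)
  ultimately have "0 \<in> g ` S"
    using connected_iff_interval[THEN iffD1, rule_format, of "g ` S" "g x" "g p" 0] assms by auto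
  then show False using assms(3) by auto
qed

lemma Rolle_finite_zeros:
  fixes g g' :: "real \<Rightarrow> real"
  assumes deriv: "\<And>x. (g has_real_derivative g' x) (at x)"
  shows "finite S \<Longrightarrow> S \<noteq> {} \<Longrightarrow> (\<And>x. x \<in> S \<Longrightarrow> g x = 0) \<Longrightarrow>
    \<exists>T. finite T \<and> T \<inter> S = {} \<and> T \<subseteq> {Min S<..<Max S} \<and> (\<forall>x\<in>T. g' x = 0)
        \<and> card S \<le> card T + 1"
proof (induction S rule: finite_linorder_max_induct)
  case (insert s S)
  show ?case
  proof (cases "S = {}")
    case True
    then show ?thesis by (intro exI[of _ "{}"]) auto
  next
    case False
    obtain T where T: "finite T" "T \<inter> S = {}" "T \<subseteq> {Min S<..<Max S}" "\<forall>x\<in>T. g' x = 0"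
        "card S \<le> card T + 1"
      using insert False by auto
    have max: "Max S \<in> S" "Max S < s" using insert False by auto
    have "continuous_on {Max S..s} g"
      by (meson DERIV_isCont continuous_at_imp_continuous_on deriv)
    moreover have "g differentiable (at x)" for x
      using deriv real_differentiable_def by blast
    ultimately obtain z where z: "Max S < z" "z < s" "(g has_real_derivative 0) (at z)"
      using Rolle[OF max(2), of g] insert.prems max by auto
    have "Min S \<le> Max S" using insert.hyps(1) False by simp
    then have minmax: "Min (insert s S) = Min S" "Max (insert s S) = s"
      using insert.hyps(1) False max by (simp_all add: Min_insert Max_insert)
    have zT: "z \<notin> T" "s \<notin> T" using z T(3) max by auto
    have zS: "z \<notin> S" "s \<notin> S"
      using Max_less_iff[OF insert.hyps(1) False, of z] z(1) insert.hyps(2) by auto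
    show ?thesis
    proof (intro exI[of _ "insert z T"] conjI)
      show "insert z T \<inter> insert s S = {}"
        using T(2) zT zS z(2) by auto
      show "insert z T \<subseteq> {Min (insert s S)<..<Max (insert s S)}"
        unfolding minmax using T(3) z \<open>Min S \<le> Max S\<close> max by auto
      show "\<forall>x\<in>insert z T. g' x = 0" using T(4) DERIV_unique[OF z(3) deriv] by simp
      show "card (insert s S) \<le> card (insert z T) + 1"
        using T(1,5) zT zS insert.hyps(1) by simp
    qed (use T(1) in simp)
  qed
qed simp

lemma Taylor_sign_near_even_order_zero:
  fixes D :: "nat \<Rightarrow> real \<Rightarrow> real"
  assumes deriv: "\<And>j t. j < r \<Longrightarrow> (D j has_real_derivative D (Suc j) t) (at t)"
    and flat: "\<And>j. j < r \<Longrightarrow> D j c = 0"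
    and cont: "isCont (D r) c" and nz: "D r c \<noteq> 0" and r: "even r" "0 < r"
  shows "\<forall>\<^sub>F y in at c. 0 < D 0 y * D r c"
proof -
  have "((\<lambda>y. D r y * D r c) \<longlongrightarrow> D r c * D r c) (at c)"
    using cont by (intro tendsto_intros) (simp add: isCont_def)
  then have "\<forall>\<^sub>F y in at c. 0 < D r y * D r c"
    by (rule order_tendstoD(1)) (use nz in \<open>metis not_real_square_gt_zero\<close>)
  then obtain d where d: "0 < d" "\<And>y. y \<noteq> c \<Longrightarrow> dist y c < d \<Longrightarrow> 0 < D r y * D r c"
    unfolding eventually_at by auto
  have "0 < D 0 y * D r c" if y: "y \<noteq> c" "dist y c < d" for y
  proof -
    obtain \<xi> where \<xi>: "if y < c then y < \<xi> \<and> \<xi> < c else c < \<xi> \<and> \<xi> < y"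
      and taylor: "D 0 y = (\<Sum>j<r. D j c / fact j * (y - c) ^ j) + D r \<xi> / fact r * (y - c) ^ r"
      using Taylor[of r D "D 0" "min y c" "max y c" c y] deriv y r by auto
    have "0 < D r \<xi> * D r c"
      using \<xi> y by (intro d(2)) (auto simp: dist_real_def split: if_splits)
    moreover have "0 < (y - c) ^ r" using r y by (simp add: zero_less_power_eq)
    moreover have "D 0 y * D r c = (D r \<xi> * D r c) * (y - c) ^ r / fact r"
      using taylor flat by simp
    ultimately show ?thesis by simp
  qed
  then show ?thesis unfolding eventually_at using d(1) by blast
qed

lemma quadratic_no_three_zeros:
  fixes \<alpha> \<beta> \<gamma> u w v :: real
  assumes "\<alpha> \<noteq> 0" "u < w" "w < v"
    and "\<alpha> * u\<^sup>2 + \<beta> * u + \<gamma> = 0" "\<alpha> * w\<^sup>2 + \<beta> * w + \<gamma> = 0" "\<alpha> * v\<^sup>2 + \<beta> * v + \<gamma> = 0"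
  shows False
proof -
  have "(u - w) * (\<alpha> * (u + w) + \<beta>) = 0" "(w - v) * (\<alpha> * (w + v) + \<beta>) = 0"
    using assms(4-6) by (simp_all add: power2_eq_square algebra_simps)
  then have "\<alpha> * (u + w) + \<beta> = 0" "\<alpha> * (w + v) + \<beta> = 0"
    using assms(2,3) by simp_all
  moreover have "\<alpha> * (u - v) = (\<alpha> * (u + w) + \<beta>) - (\<alpha> * (w + v) + \<beta>)"
    by (simp add: algebra_simps)
  ultimately show False using assms(1-3) by simp
qed

section \<open>Truncated powers\<close>

text \<open>\<open>trunc_pow m x\<close> is \<open>x\<^sub>+\<^sup>m\<close>; for \<open>m = 0\<close> it is constantly 1, not the Heaviside function,
  which is why most lemmas below require \<open>m \<ge> 1\<close>.\<close>
definition trunc_pow :: "nat \<Rightarrow> real \<Rightarrow> real" where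
  "trunc_pow m x = max x 0 ^ m"

lemma trunc_pow_nonneg_arg: "0 \<le> x \<Longrightarrow> trunc_pow m x = x ^ m"
  by (simp add: trunc_pow_def)

lemma trunc_pow_nonpos_arg: "x \<le> 0 \<Longrightarrow> 1 \<le> m \<Longrightarrow> trunc_pow m x = 0"
  by (simp add: trunc_pow_def)

lemma continuous_on_trunc_pow [continuous_intros]:
  "continuous_on S g \<Longrightarrow> continuous_on S (\<lambda>x. trunc_pow m (g x))"
  unfolding trunc_pow_def by (intro continuous_intros)

lemma DERIV_trunc_pow:
  assumes "1 \<le> m"
  shows "(trunc_pow (Suc m) has_real_derivative real (Suc m) * trunc_pow m x) (at x)"
proof (cases x "0::real" rule: linorder_cases)
  case less
  have ev: "\<forall>\<^sub>F y in nhds x. trunc_pow (Suc m) y = 0"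
    using eventually_nhds_in_open[of "{..<0}" x] less
    by (auto elim!: eventually_mono simp: trunc_pow_def)
  then have "(trunc_pow (Suc m) has_real_derivative 0) (at x)"
    using DERIV_cong_ev[OF refl ev refl] by simp
  then show ?thesis
    using less assms by (simp add: trunc_pow_nonpos_arg)
next
  case greater
  have ev: "\<forall>\<^sub>F y in nhds x. trunc_pow (Suc m) y = y ^ Suc m"
    using eventually_nhds_in_open[of "{0<..}" x] greater
    by (auto elim!: eventually_mono simp: trunc_pow_def)
  then have "(trunc_pow (Suc m) has_real_derivative real (Suc m) * x ^ m) (at x)"
    using DERIV_cong_ev[OF refl ev refl] DERIV_pow[of "Suc m" x] by simp
  then show ?thesis
    using greater by (simp add: trunc_pow_nonneg_arg)
next
  case equal
  have bound: "norm (trunc_pow (Suc m) y / y) \<le> \<bar>y\<bar> ^ m" for y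
    by (cases "0 < y") (auto simp: trunc_pow_def power_abs)
  have "\<bar>0::real\<bar> ^ m = 0" using assms by simp
  moreover have "((\<lambda>y. \<bar>y\<bar> ^ m) \<longlongrightarrow> \<bar>0\<bar> ^ m) (at (0::real))"
    by (intro tendsto_power tendsto_rabs tendsto_ident_at)
  ultimately have lim0: "((\<lambda>y. \<bar>y\<bar> ^ m) \<longlongrightarrow> 0) (at (0::real))"
    by (rule subst[where P="\<lambda>l. ((\<lambda>y. \<bar>y\<bar> ^ m) \<longlongrightarrow> l) (at 0)"])
  have "((\<lambda>y. trunc_pow (Suc m) y / y) \<longlongrightarrow> 0) (at 0)"
    by (rule Lim_null_comparison[OF always_eventually lim0]) (use bound in blast)
  then show ?thesis
    using equal assms by (simp add: has_field_derivative_iff trunc_pow_def power_0_left)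
qed

lemma DERIV_trunc_pow_compose [derivative_intros]:
  "(g has_real_derivative g') (at x within S) \<Longrightarrow> 1 \<le> m \<Longrightarrow>
   ((\<lambda>x. trunc_pow (Suc m) (g x)) has_real_derivative real (Suc m) * trunc_pow m (g x) * g')
     (at x within S)"
  using DERIV_chain2[OF DERIV_trunc_pow] .

lemma integral_trunc_pow:
  assumes "a \<le> b" "1 \<le> m"
  shows "integral {a..b} (\<lambda>x. trunc_pow m (x - t))
           = (trunc_pow (Suc m) (b - t) - trunc_pow (Suc m) (a - t)) / Suc m"
proof -
  have "((\<lambda>x. trunc_pow (Suc m) (x - t) / Suc m) has_real_derivative trunc_pow m (x - t))
          (at x within {a..b})" for x
    using assms by (auto intro!: derivative_eq_intros)
  then have "((\<lambda>x. trunc_pow m (x - t)) has_integral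
              trunc_pow (Suc m) (b - t) / Suc m - trunc_pow (Suc m) (a - t) / Suc m) {a..b}"
    using assms by (intro fundamental_theorem_of_calculus)
      (auto simp: has_real_derivative_iff_has_vector_derivative)
  then show ?thesis by (simp add: integral_unique diff_divide_distrib)
qed

lemma Taylor_trunc_pow_remainder:
  fixes f :: "real \<Rightarrow> real" and D :: "nat \<Rightarrow> real \<Rightarrow> real"
  assumes C: "Cm_derivs (Suc m) a b f D" and "1 \<le> m" and x: "x \<in> {a..b}"
  shows "f x = (\<Sum>i\<le>m. (x - a) ^ i / fact i * D i a)
             + integral {a..b} (\<lambda>t. trunc_pow m (x - t) * D (Suc m) t) / fact m"
proof -
  have D0: "D 0 = f" and Dc: "continuous_on {a..b} (D (Suc m))"
    and Dd: "\<And>j t. j < Suc m \<Longrightarrow> t \<in> {a..b} \<Longrightarrow>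
                (D j has_real_derivative D (Suc j) t) (at t within {a..b})"
    using C unfolding Cm_derivs_def by auto
  let ?h = "\<lambda>t. trunc_pow m (x - t) * D (Suc m) t"
  have "(D j has_vector_derivative D (Suc j) t) (at t within {a..x})"
    if "j < Suc m" "t \<in> {a..x}" for j t
    using DERIV_subset[OF Dd[OF that(1)], of t "{a..x}"] that x
    by (auto simp: has_real_derivative_iff_has_vector_derivative)
  then have "f x = (\<Sum>i<Suc m. ((x - a) ^ i / fact i) *\<^sub>R D i a)
                   + integral {a..x} (\<lambda>t. ((x - t) ^ m / fact m) *\<^sub>R D (Suc m) t)"
    using Taylor_integral[where p="Suc m" and Df=D and f=f and a=a and b=x] D0 x by auto
  also have "integral {a..x} (\<lambda>t. ((x - t) ^ m / fact m) *\<^sub>R D (Suc m) t)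
               = integral {a..x} ?h / fact m"
    by (subst integral_divide[symmetric], rule integral_cong) (simp add: trunc_pow_nonneg_arg)
  also have "integral {a..x} ?h = integral {a..b} ?h"
  proof -
    have "integral {x..b} ?h = 0"
      using \<open>1 \<le> m\<close> by (subst integral_cong[of _ _ "\<lambda>_. 0"]) (auto simp: trunc_pow_nonpos_arg)
    moreover have "?h integrable_on {a..b}"
      by (intro integrable_continuous_real continuous_intros Dc)
    ultimately show ?thesis
      using x Henstock_Kurzweil_Integration.integral_combine[where a=a and c=x and b=b and f="?h"] by simp
  qed
  finally show ?thesis by (simp add: lessThan_Suc_atMost)
qed

section \<open>Peano kernels of a quadrature rule\<close>

locale quadrature_rule =
  fixes a b :: real and I :: "'i set" and \<tau> \<omega> :: "'i \<Rightarrow> real"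
  assumes a_less_b: "a < b" and finite_I: "finite I" and node_mem: "k \<in> I \<Longrightarrow> \<tau> k \<in> {a..b}"
begin

definition quad_error :: "(real \<Rightarrow> real) \<Rightarrow> real" where
  "quad_error g = integral {a..b} g - (\<Sum>k\<in>I. \<omega> k * g (\<tau> k))"

lemma quad_error_cong: "(\<And>x. x \<in> {a..b} \<Longrightarrow> g x = h x) \<Longrightarrow> quad_error g = quad_error h"
  unfolding quad_error_def using node_mem by (auto intro!: integral_cong sum.cong)

lemma quad_error_diff:
  "g integrable_on {a..b} \<Longrightarrow> h integrable_on {a..b} \<Longrightarrow>
   quad_error (\<lambda>x. g x - h x) = quad_error g - quad_error h"
  unfolding quad_error_def by (simp add: integral_diff sum_subtractf algebra_simps)

lemma quad_error_cmult: "quad_error (\<lambda>x. c * g x) = c * quad_error g"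
  unfolding quad_error_def by (simp add: sum_distrib_left algebra_simps)

lemma quad_error_polynomial:
  assumes "\<And>j. j \<le> m \<Longrightarrow> quad_error (\<lambda>x. (x - a) ^ j) = 0"
  shows "quad_error (\<lambda>x. \<Sum>i\<le>m. c i * (x - a) ^ i) = 0"
proof -
  have "integral {a..b} (\<lambda>x. \<Sum>i\<le>m. c i * (x - a) ^ i)
          = (\<Sum>i\<le>m. c i * integral {a..b} (\<lambda>x. (x - a) ^ i))"
    by (subst integral_sum) (auto intro!: integrable_continuous_real continuous_intros)
  moreover have "(\<Sum>k\<in>I. \<omega> k * (\<Sum>i\<le>m. c i * (\<tau> k - a) ^ i))
                   = (\<Sum>i\<le>m. c i * (\<Sum>k\<in>I. \<omega> k * (\<tau> k - a) ^ i))"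
    unfolding sum_distrib_left by (subst sum.swap) (simp add: mult_ac)
  ultimately have "quad_error (\<lambda>x. \<Sum>i\<le>m. c i * (x - a) ^ i)
                     = (\<Sum>i\<le>m. c i * quad_error (\<lambda>x. (x - a) ^ i))"
    by (simp add: quad_error_def sum_subtractf right_diff_distrib)
  then show ?thesis using assms by simp
qed

text \<open>This is \<open>K\<^sub>m\<close>: for \<open>t \<in> [a, b]\<close> and \<open>m \<ge> 1\<close> it is the quadrature error of \<open>x \<mapsto> (x - t)\<^sub>+\<^sup>m\<close>;
  the closed form is defined for all \<open>t\<close>, so it can be differentiated on the whole line.\<close>
definition peano_kernel :: "nat \<Rightarrow> real \<Rightarrow> real" where
  "peano_kernel m t = (b - t) ^ Suc m / Suc m - (\<Sum>k\<in>I. \<omega> k * trunc_pow m (\<tau> k - t))"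

lemma peano_kernel_eq_quad_error:
  assumes "t \<in> {a..b}" "1 \<le> m"
  shows "peano_kernel m t = quad_error (\<lambda>x. trunc_pow m (x - t))"
  using assms a_less_b
  by (simp add: quad_error_def peano_kernel_def integral_trunc_pow
      trunc_pow_nonneg_arg trunc_pow_nonpos_arg)

lemma peano_kernel_above_nodes:
  assumes "1 \<le> m" "\<And>k. k \<in> I \<Longrightarrow> \<tau> k \<le> t"
  shows "peano_kernel m t = (b - t) ^ Suc m / Suc m"
  using assms by (simp add: peano_kernel_def trunc_pow_nonpos_arg)

lemma peano_kernel_below_nodes:
  assumes "odd m" and exact: "quad_error (\<lambda>x. (x - t) ^ m) = 0"
    and below: "\<And>k. k \<in> I \<Longrightarrow> t \<le> \<tau> k"
  shows "peano_kernel m t = (t - a) ^ Suc m / Suc m"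
proof -
  have "(\<Sum>k\<in>I. \<omega> k * trunc_pow m (\<tau> k - t)) = (\<Sum>k\<in>I. \<omega> k * (\<tau> k - t) ^ m)"
    using below by (intro sum.cong) (auto simp: trunc_pow_nonneg_arg)
  moreover have "(a - t) ^ Suc m = (t - a) ^ Suc m"
    using \<open>odd m\<close> by (metis even_Suc minus_diff_eq power_minus_even)
  ultimately show ?thesis
    using exact a_less_b
    by (simp add: quad_error_def peano_kernel_def integral_power_shift diff_divide_distrib)
qed

lemma continuous_on_peano_kernel: "continuous_on S (peano_kernel m)"
  unfolding peano_kernel_def[abs_def] by (intro continuous_intros) auto

lemma DERIV_peano_kernel:
  assumes "1 \<le> m"
  shows "(peano_kernel (Suc m) has_real_derivative - real (Suc m) * peano_kernel m t) (at t)"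
proof -
  have d: "((\<lambda>t. b - t) has_real_derivative -1) (at t)"
    by (auto intro!: derivative_eq_intros)
  have "((\<lambda>t. (b - t) ^ Suc (Suc m) / Suc (Suc m)) has_real_derivative
          real (Suc (Suc m)) * (b - t) ^ (Suc (Suc m) - Suc 0) * -1 / Suc (Suc m)) (at t)"
    by (intro DERIV_cdivide DERIV_chain2[OF DERIV_pow d])
  moreover have "((\<lambda>t. \<Sum>k\<in>I. \<omega> k * trunc_pow (Suc m) (\<tau> k - t)) has_real_derivative
          (\<Sum>k\<in>I. \<omega> k * (real (Suc m) * trunc_pow m (\<tau> k - t) * -1))) (at t)"
    using assms by (intro DERIV_sum DERIV_cmult DERIV_trunc_pow_compose) (auto intro!: derivative_eq_intros)
  ultimately have "(peano_kernel (Suc m) has_real_derivative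
          real (Suc (Suc m)) * (b - t) ^ (Suc (Suc m) - Suc 0) * -1 / Suc (Suc m)
          - (\<Sum>k\<in>I. \<omega> k * (real (Suc m) * trunc_pow m (\<tau> k - t) * -1))) (at t)"
    unfolding peano_kernel_def[abs_def] by (rule DERIV_diff)
  then show ?thesis
    by (simp add: peano_kernel_def sum_distrib_left right_diff_distrib mult_ac del: of_nat_Suc)
qed

lemma DERIV_peano_kernel_scaled:
  assumes "Suc j < M"
  shows "((\<lambda>t. (-1) ^ j * (fact M / fact (M - j)) * peano_kernel (M - j) t) has_real_derivative
           (-1) ^ Suc j * (fact M / fact (M - Suc j)) * peano_kernel (M - Suc j) t) (at t)"
proof -
  define m where "m = M - Suc j"
  have m: "M - j = Suc m" "1 \<le> m" using assms by (simp_all add: m_def)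
  have "((\<lambda>t. (-1) ^ j * (fact M / fact (Suc m)) * peano_kernel (Suc m) t) has_real_derivative
          (-1) ^ j * (fact M / fact (Suc m)) * (- real (Suc m) * peano_kernel m t)) (at t)"
    by (intro DERIV_cmult DERIV_peano_kernel m)
  then show ?thesis
    unfolding m(1) m_def[symmetric] by (simp add: field_simps del: of_nat_Suc)
qed

lemma peano_kernel1_zeros_enclose_node:
  assumes "u < w" "w < v"
    and zeros: "peano_kernel 1 u = 0" "peano_kernel 1 w = 0" "peano_kernel 1 v = 0"
  shows "\<exists>k\<in>I. \<tau> k \<in> {u<..<v}"
proof (rule ccontr)
  assume gap: "\<not> ?thesis"
  define J where "J = {k\<in>I. v \<le> \<tau> k}"
  define A where "A = (\<Sum>k\<in>J. \<omega> k * \<tau> k)"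
  define B where "B = (\<Sum>k\<in>J. \<omega> k)"
  have quadratic: "peano_kernel 1 t = 1/2 * t\<^sup>2 + (B - b) * t + (b\<^sup>2 / 2 - A)"
    if "t \<in> {u..v}" for t
  proof -
    have "(\<Sum>k\<in>I. \<omega> k * trunc_pow 1 (\<tau> k - t))
            = (\<Sum>k\<in>I. (if v \<le> \<tau> k then \<omega> k * \<tau> k else 0) - t * (if v \<le> \<tau> k then \<omega> k else 0))"
    proof (intro sum.cong refl)
      fix k assume "k \<in> I"
      then have "\<tau> k \<le> u \<or> v \<le> \<tau> k" using gap by force
      then show "\<omega> k * trunc_pow 1 (\<tau> k - t)
          = (if v \<le> \<tau> k then \<omega> k * \<tau> k else 0) - t * (if v \<le> \<tau> k then \<omega> k else 0)"
        using that \<open>u < w\<close> \<open>w < v\<close>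
        by (auto simp: trunc_pow_nonneg_arg trunc_pow_nonpos_arg algebra_simps)
    qed
    also have "\<dots> = A - t * B"
      unfolding A_def B_def J_def
      by (simp add: sum.inter_filter[OF finite_I] sum_subtractf sum_distrib_left)
    finally have nodes: "(\<Sum>k\<in>I. \<omega> k * trunc_pow 1 (\<tau> k - t)) = A - t * B" .
    show ?thesis
      unfolding peano_kernel_def nodes by (simp add: power2_eq_square field_simps)
  qed
  show False
    using quadratic_no_three_zeros[of "1/2" u w v "B - b" "b\<^sup>2 / 2 - A"] assms quadratic
    by fastforce
qed

lemma quad_error_integral_trunc_pow:
  assumes "1 \<le> m" and g: "continuous_on {a..b} g"
  shows "quad_error (\<lambda>x. integral {a..b} (\<lambda>t. trunc_pow m (x - t) * g t))
           = integral {a..b} (\<lambda>t. peano_kernel m t * g t)"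
proof -
  let ?h = "\<lambda>x t. trunc_pow m (x - t) * g t"
  have "continuous_on (cbox (a, a) (b, b)) (\<lambda>p. g (snd p))"
    by (rule continuous_on_compose2[OF g continuous_on_snd]) (auto simp: cbox_Pair_eq)
  then have cont: "continuous_on (cbox (a, a) (b, b)) (\<lambda>(x, t). ?h x t)"
    by (simp add: case_prod_beta') (intro continuous_intros)
  have "integral {a..b} (\<lambda>x. integral {a..b} (?h x))
          = integral {a..b} (\<lambda>t. integral {a..b} (\<lambda>x. ?h x t))"
    using integral_swap_continuous[OF cont] by (simp add: cbox_interval)
  also have "\<dots> = integral {a..b} (\<lambda>t. (b - t) ^ Suc m / Suc m * g t)"
    using a_less_b assms(1)
    by (intro integral_cong)
      (simp add: Henstock_Kurzweil_Integration.integral_mult_left integral_trunc_pow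
        trunc_pow_nonneg_arg trunc_pow_nonpos_arg)
  finally have integral_part: "integral {a..b} (\<lambda>x. integral {a..b} (?h x))
      = integral {a..b} (\<lambda>t. (b - t) ^ Suc m / Suc m * g t)" .
  have "integral {a..b} (\<lambda>t. (\<Sum>k\<in>I. \<omega> k * trunc_pow m (\<tau> k - t)) * g t)
          = integral {a..b} (\<lambda>t. \<Sum>k\<in>I. \<omega> k * ?h (\<tau> k) t)"
    by (simp add: sum_distrib_right mult.assoc)
  also have "\<dots> = (\<Sum>k\<in>I. \<omega> k * integral {a..b} (?h (\<tau> k)))"
    by (subst integral_sum)
      (auto intro!: integrable_continuous_real continuous_intros g finite_I
        simp: Henstock_Kurzweil_Integration.integral_mult_right)
  finally have sum_part: "(\<Sum>k\<in>I. \<omega> k * integral {a..b} (?h (\<tau> k)))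
      = integral {a..b} (\<lambda>t. (\<Sum>k\<in>I. \<omega> k * trunc_pow m (\<tau> k - t)) * g t)" ..
  show ?thesis
    unfolding quad_error_def integral_part sum_part peano_kernel_def left_diff_distrib
    by (rule integral_diff[symmetric]) (auto intro!: integrable_continuous_real continuous_intros g)
qed

lemma quad_error_peano:
  assumes exact: "\<And>j. j \<le> m \<Longrightarrow> quad_error (\<lambda>x. (x - a) ^ j) = 0"
    and "1 \<le> m" and C: "Cm_derivs (Suc m) a b f D"
  shows "quad_error f = integral {a..b} (\<lambda>t. peano_kernel m t * D (Suc m) t) / fact m"
proof -
  have D0: "D 0 = f" and Dc: "continuous_on {a..b} (D (Suc m))"
    and D1: "\<And>x. x \<in> {a..b} \<Longrightarrow> (D 0 has_real_derivative D 1 x) (at x within {a..b})"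
    using C unfolding Cm_derivs_def by auto
  define P where "P x = (\<Sum>i\<le>m. (D i a / fact i) * (x - a) ^ i)" for x
  define R where "R x = integral {a..b} (\<lambda>t. trunc_pow m (x - t) * D (Suc m) t)" for x
  have "continuous_on {a..b} f"
    using DERIV_continuous_on[OF D1] D0 by simp
  then have "quad_error (\<lambda>x. f x - P x) = quad_error f - quad_error P"
    by (intro quad_error_diff integrable_continuous_real) (auto simp: P_def intro!: continuous_intros)
  also have "quad_error P = 0"
    unfolding P_def by (rule quad_error_polynomial[OF exact])
  also have "quad_error (\<lambda>x. f x - P x) = quad_error (\<lambda>x. 1 / fact m * R x)"
    using Taylor_trunc_pow_remainder[OF C \<open>1 \<le> m\<close>]
    by (intro quad_error_cong) (simp add: P_def R_def mult.commute)
  also have "\<dots> = integral {a..b} (\<lambda>t. peano_kernel m t * D (Suc m) t) / fact m"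
    unfolding quad_error_cmult R_def quad_error_integral_trunc_pow[OF \<open>1 \<le> m\<close> Dc] by simp
  finally show ?thesis by simp
qed

lemma quad_error_monomial:
  assumes exact: "\<And>j. j \<le> m \<Longrightarrow> quad_error (\<lambda>x. (x - a) ^ j) = 0" and "1 \<le> m"
  shows "quad_error (\<lambda>x. (x - a) ^ Suc m / fact (Suc m)) = integral {a..b} (peano_kernel m) / fact m"
  using quad_error_peano[OF exact \<open>1 \<le> m\<close> Cm_derivs_monomial] by simp

lemma quad_error_mean_value:
  assumes exact: "\<And>j. j \<le> m \<Longrightarrow> quad_error (\<lambda>x. (x - a) ^ j) = 0" and "1 \<le> m"
    and nonneg: "\<And>t. t \<in> {a..b} \<Longrightarrow> 0 \<le> peano_kernel m t"
    and C: "Cm_derivs (Suc m) a b f D"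
  shows "\<exists>\<xi>\<in>{a..b}. quad_error f = quad_error (\<lambda>x. (x - a) ^ Suc m / fact (Suc m)) * D (Suc m) \<xi>"
proof -
  have "continuous_on {a..b} (D (Suc m))" using C by (simp add: Cm_derivs_def)
  then obtain \<xi> where "\<xi> \<in> {a..b}"
    "integral {a..b} (\<lambda>t. peano_kernel m t * D (Suc m) t) = integral {a..b} (peano_kernel m) * D (Suc m) \<xi>"
    using integral_weighted_mean_value[OF less_imp_le[OF a_less_b] continuous_on_peano_kernel nonneg]
    by blast
  then show ?thesis
    using quad_error_peano[OF exact \<open>1 \<le> m\<close> C] quad_error_monomial[OF exact \<open>1 \<le> m\<close>] by auto
qed

lemma quad_error_monomial_pos:
  assumes exact: "\<And>j. j \<le> m \<Longrightarrow> quad_error (\<lambda>x. (x - a) ^ j) = 0" and "1 \<le> m"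
    and nonneg: "\<And>t. t \<in> {a..b} \<Longrightarrow> 0 \<le> peano_kernel m t"
    and pos: "t\<^sub>0 \<in> {a..b}" "0 < peano_kernel m t\<^sub>0"
  shows "0 < quad_error (\<lambda>x. (x - a) ^ Suc m / fact (Suc m))"
proof -
  have "0 \<le> integral {a..b} (peano_kernel m)"
    using nonneg by (intro integral_nonneg integrable_continuous_real continuous_on_peano_kernel)
  moreover have "integral {a..b} (peano_kernel m) \<noteq> 0"
    using integral_eq_0_iff[OF continuous_on_peano_kernel a_less_b nonneg] pos by auto
  moreover have "quad_error (\<lambda>x. (x - a) ^ Suc m / fact (Suc m)) = integral {a..b} (peano_kernel m) / fact m"
    by (rule quad_error_monomial[OF exact \<open>1 \<le> m\<close>])
  ultimately show ?thesis by simp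
qed

end

section \<open>The Gaussian rule for the quintic \<open>C\<^sup>1\<close> splines\<close>

lemma uknot_less: "a < b \<Longrightarrow> 0 < n \<Longrightarrow> i < j \<Longrightarrow> uknot a b n i < uknot a b n j"
  unfolding uknot_def by (auto intro!: divide_strict_right_mono mult_strict_right_mono)

lemma uknot_0 [simp]: "uknot a b n 0 = a"
  by (simp add: uknot_def)

lemma uknot_last: "0 < n \<Longrightarrow> uknot a b n n = b"
  by (simp add: uknot_def)

lemma spline51I:
  assumes "\<And>x. (g has_real_derivative g' x) (at x)" "continuous_on {a..b} g'"
    and "\<And>k. k \<in> {1..n} \<Longrightarrow> \<exists>p :: real poly. degree p \<le> 5 \<and>
           (\<forall>x\<in>{uknot a b n (k - 1)<..<uknot a b n k}. g x = poly p x)"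
  shows "g \<in> spline51 a b n"
  unfolding spline51_def C1_on_interval_def
  using assms by (auto intro: has_field_derivative_at_within)

locale gauss_rule51 = quadrature_rule a b "{1..2*n+1}" \<tau> \<omega>
  for a b :: real and n :: nat and \<tau> \<omega> :: "nat \<Rightarrow> real" +
  assumes n_pos: "1 \<le> n" and exact_spline: "f \<in> spline51 a b n \<Longrightarrow> quad_error f = 0"
begin

abbreviation knot :: "nat \<Rightarrow> real" where
  "knot \<equiv> uknot a b n"

definition knots :: "real set" where
  "knots = knot ` {0..n}"

definition inner_knots :: "real set" where
  "inner_knots = knot ` {1..<n}"

lemma knot_less: "i < j \<Longrightarrow> knot i < knot j"
  using uknot_less a_less_b n_pos by simp

lemma knot_le: "i \<le> j \<Longrightarrow> knot i \<le> knot j"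
  using knot_less by (cases "i = j") (auto simp: order_less_imp_le)

lemma knot_mem: "i \<le> n \<Longrightarrow> knot i \<in> {a..b}"
  using knot_le[of 0 i] knot_le[of i n] uknot_last n_pos by simp

lemma knots_eq: "knots = insert a (insert b inner_knots)"
proof -
  have "{0..n} = insert 0 (insert n {1..<n})" using n_pos by auto
  then show ?thesis
    using n_pos uknot_last[of n a b] unfolding knots_def inner_knots_def by simp
qed

lemma inner_knots_subset: "inner_knots \<subseteq> {a<..<b}"
  using knot_less[of 0] knot_less[of _ n] uknot_last[of n a b] n_pos
  unfolding inner_knots_def by auto

lemma finite_knots: "finite knots"
  by (simp add: knots_def)

lemma knots_subset: "knots \<subseteq> {a..b}"
  using knot_mem unfolding knots_def by auto

lemma card_knots: "card knots = n + 1"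
proof -
  have "inj_on knot {0..n}"
    by (rule inj_onI) (metis knot_less less_irrefl linorder_neqE_nat)
  then show ?thesis by (simp add: knots_def card_image)
qed

lemma knot_interval_not_knot:
  assumes "j \<in> {1..n}" "t \<in> {knot (j - 1)<..<knot j}"
  shows "t \<in> {a..b}" "t \<notin> knots"
proof -
  have "knot (j - 1) \<in> {a..b}" "knot j \<in> {a..b}" using assms(1) knot_mem by auto
  then show "t \<in> {a..b}" using assms(2) by auto
  show "t \<notin> knots"
  proof
    assume "t \<in> knots"
    then obtain i where "t = knot i" unfolding knots_def by auto
    moreover have "knot i \<le> knot (j - 1) \<or> knot j \<le> knot i"
      using knot_le[of i "j - 1"] knot_le[of j i] by linarith
    ultimately show False using assms(2) by auto
  qed
qed

lemma knot_interval_exists: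
  assumes "t \<in> {a..b}" "t \<notin> knots"
  obtains j where "j \<in> {1..n}" "t \<in> {knot (j - 1)<..<knot j}"
proof -
  have "t \<noteq> a" "t \<noteq> b" using assms(2) knots_eq by auto
  then have t: "a < t" "t < knot n" using assms(1) uknot_last[of n a b] n_pos by auto
  define j where "j = (LEAST j. t < knot j)"
  have "t < knot j" unfolding j_def by (rule LeastI[of _ n]) (use t in simp)
  moreover have "j \<le> n" unfolding j_def by (rule Least_le) (use t in simp)
  moreover have "j \<noteq> 0"
    by (rule notI) (use \<open>t < knot j\<close> t in simp)
  moreover have "\<not> t < knot (j - 1)"
    unfolding j_def by (rule not_less_Least) (use \<open>j \<noteq> 0\<close> in \<open>simp add: j_def\<close>)
  moreover have "knot (j - 1) \<noteq> t" using assms(2) \<open>j \<le> n\<close> unfolding knots_def by force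
  ultimately show ?thesis by (intro that[of j]) auto
qed

lemma quad_error_power: "j \<le> 5 \<Longrightarrow> quad_error (\<lambda>x. (x - c) ^ j) = 0"
proof (rule exact_spline, rule spline51I)
  show "((\<lambda>x. (x - c) ^ j) has_real_derivative real j * (x - c) ^ (j - Suc 0) * 1) (at x)" for x
    by (rule DERIV_chain2[OF DERIV_pow]) (auto intro!: derivative_eq_intros)
  show "\<exists>p :: real poly. degree p \<le> 5 \<and> (\<forall>x\<in>{knot (k - 1)<..<knot k}. (x - c) ^ j = poly p x)"
    if "j \<le> 5" for k
    using that by (intro exI[of _ "[:-c, 1:] ^ j"]) (simp add: degree_linear_power poly_power)
qed (intro continuous_intros)

lemma quad_error_trunc_pow_knot:
  assumes "2 \<le> p" "p \<le> 5"
  shows "quad_error (\<lambda>x. trunc_pow p (x - knot i)) = 0"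
proof (rule exact_spline, rule spline51I)
  define q where "q = p - 1"
  have q: "p = Suc q" "1 \<le> q" using assms by (simp_all add: q_def)
  show "((\<lambda>x. trunc_pow p (x - knot i)) has_real_derivative real p * trunc_pow q (x - knot i) * 1)
          (at x)" for x
    unfolding q(1) using q(2) by (intro DERIV_trunc_pow_compose) (auto intro!: derivative_eq_intros)
  show "continuous_on {a..b} (\<lambda>x. real p * trunc_pow q (x - knot i) * 1)"
    by (intro continuous_intros)
  fix k
  show "\<exists>r :: real poly. degree r \<le> 5 \<and>
          (\<forall>x\<in>{knot (k - 1)<..<knot k}. trunc_pow p (x - knot i) = poly r x)"
  proof (cases "k \<le> i")
    case True
    then have "knot k \<le> knot i" by (rule knot_le)
    then show ?thesis using assms
      by (intro exI[of _ 0]) (auto simp: trunc_pow_nonpos_arg)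
  next
    case False
    then have "knot i \<le> knot (k - 1)" by (intro knot_le) auto
    then show ?thesis using assms
      by (intro exI[of _ "[:- knot i, 1:] ^ p"])
        (auto simp: trunc_pow_nonneg_arg degree_linear_power poly_power)
  qed
qed

lemma peano_kernel_knot_zero:
  assumes "2 \<le> m" "m \<le> 5" "c \<in> knots"
  shows "peano_kernel m c = 0"
proof -
  obtain i where "i \<le> n" "c = knot i" using assms(3) unfolding knots_def by auto
  then show ?thesis
    using assms knot_mem peano_kernel_eq_quad_error quad_error_trunc_pow_knot by simp
qed

lemma peano_kernel1_a: "peano_kernel 1 a = 0"
proof -
  have "peano_kernel 1 a = quad_error (\<lambda>x. trunc_pow 1 (x - a))"
    using a_less_b by (intro peano_kernel_eq_quad_error) auto
  also have "\<dots> = quad_error (\<lambda>x. (x - a) ^ 1)"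
    by (intro quad_error_cong) (simp add: trunc_pow_nonneg_arg)
  finally show ?thesis using quad_error_power[of 1 a] by simp
qed

lemma peano_kernel1_b: "peano_kernel 1 b = 0"
  using peano_kernel_above_nodes[of 1 b] node_mem by simp

lemma peano_kernel_zeros_step:
  assumes "1 \<le> m" "finite S" "S \<noteq> {}" "S \<subseteq> {a..b}"
    and zeros: "\<And>x. x \<in> S \<Longrightarrow> peano_kernel (Suc m) x = 0"
  shows "\<exists>T. finite T \<and> T \<subseteq> {a<..<b} \<and> T \<inter> S = {} \<and> (\<forall>x\<in>T. peano_kernel m x = 0)
             \<and> card S \<le> card T + 1"
proof -
  obtain T where T: "finite T" "T \<inter> S = {}" "T \<subseteq> {Min S<..<Max S}"
      "\<forall>x\<in>T. - real (Suc m) * peano_kernel m x = 0" "card S \<le> card T + 1"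
    using Rolle_finite_zeros[OF DERIV_peano_kernel[OF \<open>1 \<le> m\<close>] assms(2,3) zeros] by blast
  moreover have "{Min S<..<Max S} \<subseteq> {a<..<b}"
    using assms(2-4) Min_in Max_in by fastforce
  ultimately show ?thesis by (intro exI[of _ T]) auto
qed

lemma peano_kernel_zeros_step_knots:
  assumes "2 \<le> m" "m \<le> 4" "finite S" "knots \<subseteq> S" "S \<subseteq> {a..b}"
    and zeros: "\<And>x. x \<in> S \<Longrightarrow> peano_kernel (Suc m) x = 0"
  shows "\<exists>S'. finite S' \<and> knots \<subseteq> S' \<and> S' \<subseteq> {a..b} \<and> (\<forall>x\<in>S'. peano_kernel m x = 0)
              \<and> card S + n \<le> card S'"
proof -
  have "S \<noteq> {}" using assms(4) knots_eq by auto
  then obtain T where T: "finite T" "T \<subseteq> {a<..<b}" "T \<inter> S = {}" "\<forall>x\<in>T. peano_kernel m x = 0"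
      "card S \<le> card T + 1"
    using peano_kernel_zeros_step[of m S] assms by auto
  have "card (T \<union> knots) = card T + (n + 1)"
    using T(1,3) assms(4) finite_knots card_knots by (subst card_Un_disjoint) auto
  then show ?thesis
    using T assms(1,2) knots_subset peano_kernel_knot_zero
    by (intro exI[of _ "T \<union> knots"]) auto
qed

lemma peano_kernel1_zeros_from_peano_kernel5_zeros:
  assumes "finite S" "knots \<subseteq> S" "S \<subseteq> {a..b}" "\<And>x. x \<in> S \<Longrightarrow> peano_kernel 5 x = 0"
  shows "\<exists>Z. finite Z \<and> Z \<subseteq> {a..b} \<and> a \<in> Z \<and> b \<in> Z \<and> Z \<inter> inner_knots = {}
             \<and> (\<forall>x\<in>Z. peano_kernel 1 x = 0) \<and> card S + 3 * n + 1 \<le> card Z"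
proof -
  obtain S4 where S4: "finite S4" "knots \<subseteq> S4" "S4 \<subseteq> {a..b}" "\<forall>x\<in>S4. peano_kernel 4 x = 0"
      "card S + n \<le> card S4"
    using peano_kernel_zeros_step_knots[of 4 S] assms by auto
  obtain S3 where S3: "finite S3" "knots \<subseteq> S3" "S3 \<subseteq> {a..b}" "\<forall>x\<in>S3. peano_kernel 3 x = 0"
      "card S4 + n \<le> card S3"
    using peano_kernel_zeros_step_knots[of 3 S4] S4 by auto
  obtain S2 where S2: "finite S2" "knots \<subseteq> S2" "S2 \<subseteq> {a..b}" "\<forall>x\<in>S2. peano_kernel 2 x = 0"
      "card S3 + n \<le> card S2"
    using peano_kernel_zeros_step_knots[of 2 S3] S3 by (auto simp: numeral_3_eq_3)
  have "S2 \<noteq> {}" using S2(2) knots_eq by auto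
  then obtain T where T: "finite T" "T \<subseteq> {a<..<b}" "T \<inter> S2 = {}" "\<forall>x\<in>T. peano_kernel 1 x = 0"
      "card S2 \<le> card T + 1"
    using peano_kernel_zeros_step[of 1 S2] S2 by (auto simp: numeral_2_eq_2)
  have "a \<notin> T" "b \<notin> T" using T(2) by auto
  then have "card (insert a (insert b T)) = card T + 2"
    using T(1) a_less_b by simp
  moreover have "insert a (insert b T) \<inter> inner_knots = {}"
    using T(3) S2(2) knots_eq inner_knots_subset by auto
  ultimately show ?thesis
    using T S2(5) S3(5) S4(5) a_less_b peano_kernel1_a peano_kernel1_b
    by (intro exI[of _ "insert a (insert b T)"]) auto
qed

lemma peano_kernel1_zero_node_above:
  assumes "t \<in> {a..<b}" "peano_kernel 1 t = 0"
  shows "\<exists>k\<in>{1..2*n+1}. t < \<tau> k"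
proof (rule ccontr)
  assume "\<not> ?thesis"
  then have "peano_kernel 1 t = (b - t) ^ Suc 1 / Suc 1"
    by (intro peano_kernel_above_nodes) (auto simp: not_less)
  then show False using assms by simp
qed

lemma peano_kernel1_zero_node_below:
  assumes "t \<in> {a<..b}" "peano_kernel 1 t = 0"
  shows "\<exists>k\<in>{1..2*n+1}. \<tau> k < t"
proof (rule ccontr)
  assume "\<not> ?thesis"
  then have "peano_kernel 1 t = (t - a) ^ Suc 1 / Suc 1"
    using quad_error_power[of 1 t] by (intro peano_kernel_below_nodes) (auto simp: not_less)
  then show False using assms by simp
qed

text \<open>Between two zeros of \<open>K\<^sub>1\<close> with a third one in between there is a node, because
  \<open>K\<^sub>1\<close> is a genuine quadratic on node-free intervals; and beyond every zero below \<open>b\<close>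
  there is a node, because after the last node \<open>K\<^sub>1(t) = (b - t)\<^sup>2/2\<close>.\<close>
lemma card_nodes_above_peano_kernel1_zeros:
  "finite Z \<Longrightarrow> Z \<subseteq> {a..<b} \<Longrightarrow> (\<And>x. x \<in> Z \<Longrightarrow> peano_kernel 1 x = 0) \<Longrightarrow>
   2 * j + 1 \<le> card Z \<Longrightarrow> j + 1 \<le> card {k\<in>{1..2*n+1}. Min Z < \<tau> k}"
proof (induction j arbitrary: Z)
  case 0
  then have "Min Z \<in> Z" by (intro Min_in) auto
  then obtain k where "k \<in> {1..2*n+1}" "Min Z < \<tau> k"
    using peano_kernel1_zero_node_above 0 by blast
  then show ?case by (auto simp: Suc_le_eq card_gt_0_iff)
next
  case (Suc j)
  define u where "u = Min Z"
  define w where "w = Min (Z - {u})"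
  define Z' where "Z' = Z - {u} - {w}"
  have u: "u \<in> Z" using Suc.prems(1,4) unfolding u_def by (intro Min_in) auto
  have card1: "card (Z - {u}) = card Z - 1" using u by simp
  then have "0 < card (Z - {u})" using Suc.prems(4) by simp
  then have w: "w \<in> Z - {u}" unfolding w_def card_gt_0_iff by (intro Min_in) auto
  have card2: "card Z' = card Z - 2" using card1 w unfolding Z'_def by simp
  then have "0 < card Z'" using Suc.prems(4) by simp
  define v where "v = Min Z'"
  have v: "v \<in> Z'" using \<open>0 < card Z'\<close> unfolding v_def card_gt_0_iff by (intro Min_in) auto
  have "u < w" using w Suc.prems(1) unfolding u_def by (auto intro: le_neq_trans)
  have "w < v" using v Suc.prems(1) unfolding w_def Z'_def by (auto intro: le_neq_trans)
  have IH: "j + 1 \<le> card {k\<in>{1..2*n+1}. v < \<tau> k}"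
    unfolding v_def using Suc.prems card2 by (intro Suc.IH) (auto simp: Z'_def)
  obtain k0 where k0: "k0 \<in> {1..2*n+1}" "\<tau> k0 \<in> {u<..<v}"
    using peano_kernel1_zeros_enclose_node[OF \<open>u < w\<close> \<open>w < v\<close>] Suc.prems(3) u w v
    unfolding Z'_def by auto
  have "k0 \<notin> {k\<in>{1..2*n+1}. v < \<tau> k}" using k0 by auto
  then have "card {k\<in>{1..2*n+1}. v < \<tau> k} + 1 = card (insert k0 {k\<in>{1..2*n+1}. v < \<tau> k})"
    by simp
  also have "\<dots> \<le> card {k\<in>{1..2*n+1}. u < \<tau> k}"
    using k0 \<open>u < w\<close> \<open>w < v\<close> by (intro card_mono) auto
  finally show ?case using IH unfolding u_def by simp
qed

lemma card_peano_kernel1_zeros: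
  assumes "finite Z" "Z \<subseteq> {a..b}" "\<And>x. x \<in> Z \<Longrightarrow> peano_kernel 1 x = 0"
  shows "card Z \<le> 4 * n + 2"
proof (rule ccontr)
  assume many: "\<not> ?thesis"
  define Z' where "Z' = Z - {a, b}"
  have "card Z - 2 \<le> card Z'"
    using diff_card_le_card_Diff[of "{a, b}" Z] a_less_b unfolding Z'_def by simp
  then have card: "2 * (2 * n) + 1 \<le> card Z'" using many by simp
  have Z': "finite Z'" "Z' \<subseteq> {a<..<b}" using assms unfolding Z'_def by auto
  have "Z' \<noteq> {}" using card by auto
  then have "Min Z' \<in> Z'" using Z'(1) by (intro Min_in)
  then have "Min Z' \<in> {a<..b}" "peano_kernel 1 (Min Z') = 0"
    using Z'(2) assms(3) unfolding Z'_def by auto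
  then obtain k0 where k0: "k0 \<in> {1..2*n+1}" "\<tau> k0 < Min Z'"
    using peano_kernel1_zero_node_below by blast
  have "Z' \<subseteq> {a..<b}" "\<And>x. x \<in> Z' \<Longrightarrow> peano_kernel 1 x = 0"
    using Z'(2) assms(3) unfolding Z'_def by auto
  then have "2 * n + 1 \<le> card {k\<in>{1..2*n+1}. Min Z' < \<tau> k}"
    using card_nodes_above_peano_kernel1_zeros[OF Z'(1) _ _ card] by blast
  moreover have "card (insert k0 {k\<in>{1..2*n+1}. Min Z' < \<tau> k}) \<le> card {1..2*n+1}"
    using k0 by (intro card_mono) auto
  ultimately show False using k0 by simp
qed

lemma nodes_above_a_if_many_peano_kernel1_zeros:
  assumes "finite Z" "Z \<subseteq> {a..b}" "a \<in> Z" "b \<in> Z" "\<And>x. x \<in> Z \<Longrightarrow> peano_kernel 1 x = 0"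
    and "4 * n + 2 \<le> card Z" "k \<in> {1..2*n+1}"
  shows "a < \<tau> k"
proof -
  define Z' where "Z' = Z - {b}"
  have Z': "finite Z'" "Z' \<subseteq> {a..<b}" "card Z' = card Z - 1" "Min Z' = a"
    using assms a_less_b unfolding Z'_def by (auto intro!: Min_eqI)
  then have "2 * n + 1 \<le> card {k\<in>{1..2*n+1}. a < \<tau> k}"
    using card_nodes_above_peano_kernel1_zeros[of Z' "2 * n"] assms(5,6) unfolding Z'_def by auto
  moreover have "card {k\<in>{1..2*n+1}. a < \<tau> k} \<le> card {1..2*n+1}"
    by (intro card_mono) auto
  ultimately have "{k\<in>{1..2*n+1}. a < \<tau> k} = {1..2*n+1}"
    by (intro card_subset_eq) auto
  then show ?thesis using assms(7) by blast
qed

lemma peano_kernel1_zeros_from_knots: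
  obtains Z where "finite Z" "Z \<subseteq> {a..b}" "a \<in> Z" "b \<in> Z" "Z \<inter> inner_knots = {}"
    "\<And>x. x \<in> Z \<Longrightarrow> peano_kernel 1 x = 0" "4 * n + 2 \<le> card Z"
proof -
  have "\<And>x. x \<in> knots \<Longrightarrow> peano_kernel 5 x = 0" using peano_kernel_knot_zero by simp
  then obtain Z where "finite Z \<and> Z \<subseteq> {a..b} \<and> a \<in> Z \<and> b \<in> Z \<and> Z \<inter> inner_knots = {}
      \<and> (\<forall>x\<in>Z. peano_kernel 1 x = 0) \<and> card knots + 3 * n + 1 \<le> card Z"
    using peano_kernel1_zeros_from_peano_kernel5_zeros[OF finite_knots order_refl knots_subset] by blast
  then show ?thesis using card_knots by (intro that[of Z]) auto
qed

lemma nodes_above_a: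
  assumes "k \<in> {1..2*n+1}"
  shows "a < \<tau> k"
proof -
  obtain Z where Z: "finite Z" "Z \<subseteq> {a..b}" "a \<in> Z" "b \<in> Z" "Z \<inter> inner_knots = {}"
      "\<And>x. x \<in> Z \<Longrightarrow> peano_kernel 1 x = 0" "4 * n + 2 \<le> card Z"
    using peano_kernel1_zeros_from_knots by blast
  show ?thesis by (rule nodes_above_a_if_many_peano_kernel1_zeros[OF Z(1-4,6,7) assms])
qed

lemma peano_kernel5_nonzero:
  assumes "t \<in> {a..b}" "t \<notin> knots"
  shows "peano_kernel 5 t \<noteq> 0"
proof
  assume "peano_kernel 5 t = 0"
  then have "\<And>x. x \<in> insert t knots \<Longrightarrow> peano_kernel 5 x = 0"
    using peano_kernel_knot_zero by auto
  moreover have "finite (insert t knots)" "insert t knots \<subseteq> {a..b}"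
    using finite_knots knots_subset assms(1) by auto
  ultimately obtain Z where Z: "finite Z" "Z \<subseteq> {a..b}" "\<forall>x\<in>Z. peano_kernel 1 x = 0"
      "card (insert t knots) + 3 * n + 1 \<le> card Z"
    using peano_kernel1_zeros_from_peano_kernel5_zeros[of "insert t knots"] by blast
  moreover have "card (insert t knots) = n + 2" using assms(2) finite_knots card_knots by simp
  ultimately have "4 * n + 3 \<le> card Z" by simp
  moreover have "card Z \<le> 4 * n + 2" using Z by (intro card_peano_kernel1_zeros) auto
  ultimately show False by simp
qed

lemma peano_kernel1_inner_knot_nonzero:
  assumes "c \<in> inner_knots"
  shows "peano_kernel 1 c \<noteq> 0"
proof
  assume "peano_kernel 1 c = 0"
  obtain Z where Z: "finite Z" "Z \<subseteq> {a..b}" "a \<in> Z" "b \<in> Z" "Z \<inter> inner_knots = {}"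
      "\<And>x. x \<in> Z \<Longrightarrow> peano_kernel 1 x = 0" "4 * n + 2 \<le> card Z"
    using peano_kernel1_zeros_from_knots by blast
  have "card (insert c Z) \<le> 4 * n + 2"
    using Z assms inner_knots_subset \<open>peano_kernel 1 c = 0\<close>
    by (intro card_peano_kernel1_zeros) auto
  moreover have "c \<notin> Z" using Z(5) assms by auto
  ultimately show False using Z(1,7) by simp
qed

lemma peano_kernel5_pos_near_a: "\<exists>t\<in>{a<..<knot 1}. 0 < peano_kernel 5 t"
proof -
  define \<mu> where "\<mu> = min (knot 1) (Min (\<tau> ` {1..2*n+1}))"
  have "a < \<mu>" using nodes_above_a knot_less[of 0 1] unfolding \<mu>_def by auto
  define t where "t = (a + \<mu>) / 2"
  have t: "a < t" "t < \<mu>" using \<open>a < \<mu>\<close> unfolding t_def by auto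
  have kernel: "peano_kernel 5 t = (t - a) ^ Suc 5 / Suc 5"
    using quad_error_power[of 5 t] t unfolding \<mu>_def
    by (intro peano_kernel_below_nodes) (auto simp: less_imp_le)
  have "0 < peano_kernel 5 t" unfolding kernel using t by simp
  moreover have "t \<in> {a<..<knot 1}" using t unfolding \<mu>_def by simp
  ultimately show ?thesis by blast
qed

lemma peano_kernel5_sign_at_inner_knot:
  assumes "c \<in> inner_knots"
  shows "\<forall>\<^sub>F y in at c. 0 < peano_kernel 5 y * peano_kernel 1 c"
proof -
  \<comment> \<open>\<open>D j\<close> is the \<open>j\<close>-th derivative of \<open>K\<^sub>5\<close>; it vanishes at the knot for \<open>j < 4\<close>.\<close>
  define D where "D j t = (-1) ^ j * (fact 5 / fact (5 - j)) * peano_kernel (5 - j) t" for j t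
  have "c \<in> knots" using assms knots_eq by auto
  have "\<forall>\<^sub>F y in at c. 0 < D 0 y * D 4 c"
  proof (rule Taylor_sign_near_even_order_zero)
    show "(D j has_real_derivative D (Suc j) t) (at t)" if "j < 4" for j t
      unfolding D_def[abs_def] using that by (intro DERIV_peano_kernel_scaled) simp
    show "D j c = 0" if "j < 4" for j
      unfolding D_def using that peano_kernel_knot_zero[OF _ _ \<open>c \<in> knots\<close>, of "5 - j"] by simp
    show "isCont (D 4) c"
      unfolding D_def[abs_def]
      using continuous_on_peano_kernel[of UNIV] by (simp add: continuous_on_eq_continuous_at)
    show "D 4 c \<noteq> 0"
      using peano_kernel1_inner_knot_nonzero[OF assms] by (simp add: D_def fact_numeral)
  qed auto
  then show ?thesis
    by (simp add: D_def fact_numeral zero_less_mult_iff)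
qed

lemma peano_kernel5_knot_interval_pos_if_pos_at:
  assumes "j \<in> {1..n}" "p \<in> {knot (j - 1)<..<knot j}" "0 < peano_kernel 5 p"
    and "t \<in> {knot (j - 1)<..<knot j}"
  shows "0 < peano_kernel 5 t"
proof (rule connected_nonvanishing_pos[OF _ continuous_on_peano_kernel _ assms(2-4)])
  show "peano_kernel 5 x \<noteq> 0" if "x \<in> {knot (j - 1)<..<knot j}" for x
    using knot_interval_not_knot[OF assms(1) that] by (intro peano_kernel5_nonzero)
qed simp

lemma peano_kernel5_pos_on_knot_interval:
  "j \<in> {1..n} \<Longrightarrow> t \<in> {knot (j - 1)<..<knot j} \<Longrightarrow> 0 < peano_kernel 5 t"
proof (induction j arbitrary: t)
  case (Suc j)
  have interval_pos: "0 < peano_kernel 5 t" if "p \<in> {knot j<..<knot (Suc j)}" "0 < peano_kernel 5 p"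
    for p
    using peano_kernel5_knot_interval_pos_if_pos_at[of "Suc j" p t] Suc.prems that by simp
  show ?case
  proof (cases "j = 0")
    case True
    then show ?thesis using peano_kernel5_pos_near_a interval_pos by auto
  next
    case False
    \<comment> \<open>Positivity of \<open>K\<^sub>5\<close> left of the knot forces \<open>K\<^sub>1 > 0\<close> at the knot, hence
      positivity of \<open>K\<^sub>5\<close> on its right.\<close>
    have c: "knot j \<in> inner_knots" using False Suc.prems(1) unfolding inner_knots_def by auto
    have sign: "\<forall>\<^sub>F y in at_left (knot j). 0 < peano_kernel 5 y * peano_kernel 1 (knot j)"
        "\<forall>\<^sub>F y in at_right (knot j). 0 < peano_kernel 5 y * peano_kernel 1 (knot j)"
      using peano_kernel5_sign_at_inner_knot[OF c] by (simp_all add: eventually_at_split)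
    obtain y where y: "y \<in> {knot (j - 1)<..<knot j}" "0 < peano_kernel 5 y * peano_kernel 1 (knot j)"
      using eventually_happens'[OF trivial_limit_at_left_real
          eventually_conj[OF eventually_at_left_real[of "knot (j - 1)" "knot j"] sign(1)]]
        knot_less[of "j - 1" j] False by auto
    have "0 < peano_kernel 5 y" using Suc.IH[OF _ y(1)] False Suc.prems(1) by auto
    then have "0 < peano_kernel 1 (knot j)" using y(2) by (simp add: zero_less_mult_iff)
    obtain z where z: "z \<in> {knot j<..<knot (Suc j)}" "0 < peano_kernel 5 z * peano_kernel 1 (knot j)"
      using eventually_happens'[OF trivial_limit_at_right_real
          eventually_conj[OF eventually_at_right_real[of "knot j" "knot (Suc j)"] sign(2)]]
        knot_less[of j "Suc j"] by auto
    then show ?thesis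
      using \<open>0 < peano_kernel 1 (knot j)\<close> interval_pos by (simp add: zero_less_mult_iff)
  qed
qed simp

lemma peano_kernel5_nonneg:
  assumes "t \<in> {a..b}"
  shows "0 \<le> peano_kernel 5 t"
proof (cases "t \<in> knots")
  case True
  then show ?thesis using peano_kernel_knot_zero[of 5 t] by simp
next
  case False
  with assms obtain j where "j \<in> {1..n}" "t \<in> {knot (j - 1)<..<knot j}"
    by (rule knot_interval_exists)
  then show ?thesis using peano_kernel5_pos_on_knot_interval less_imp_le by blast
qed

lemma quad_error_sixth_power:
  "quad_error (\<lambda>x. (x - a) ^ 6 / fact 6)
     = (b - a) ^ 7 / 5040 - (1/720) * (\<Sum>k=1..2*n+1. \<omega> k * (\<tau> k - a) ^ 6)"
  unfolding quad_error_def using a_less_b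
  by (simp add: Henstock_Kurzweil_Integration.integral_divide integral_power_shift
      fact_numeral sum_divide_distrib del: sum.cl_ivl_Suc)

lemma quad_error_sixth_power_pos: "0 < quad_error (\<lambda>x. (x - a) ^ 6 / fact 6)"
proof -
  obtain t\<^sub>0 where t\<^sub>0: "t\<^sub>0 \<in> {a<..<knot 1}" "0 < peano_kernel 5 t\<^sub>0"
    using peano_kernel5_pos_near_a by blast
  moreover have "t\<^sub>0 \<in> {a..b}" using t\<^sub>0(1) knot_mem[of 1] n_pos by auto
  ultimately have "0 < quad_error (\<lambda>x. (x - a) ^ Suc 5 / fact (Suc 5))"
    by (intro quad_error_monomial_pos[where m=5, OF quad_error_power _ peano_kernel5_nonneg]) auto
  then show ?thesis by simp
qed

lemma quad_error_mean_value_form: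
  "Cm_derivs 6 a b f D \<Longrightarrow> \<exists>\<xi>\<in>{a..b}. quad_error f = quad_error (\<lambda>x. (x - a) ^ 6 / fact 6) * D 6 \<xi>"
  using quad_error_mean_value[where m=5, OF quad_error_power _ peano_kernel5_nonneg, of f D] by simp

end

lemma gauss_rule51I:
  assumes "a < b" "1 \<le> n" "gaussian_rule51 a b n \<tau> \<omega>"
  shows "gauss_rule51 a b n \<tau> \<omega>"
proof -
  interpret quadrature_rule a b "{1..2*n+1}" \<tau> \<omega>
    using assms by unfold_locales (auto simp: gaussian_rule51_def)
  show ?thesis
  proof unfold_locales
    show "quad_error f = 0" if "f \<in> spline51 a b n" for f
      using assms(3) that unfolding gaussian_rule51_def quad_error_def by simp
  qed (rule assms(2))
qed

theorem theorem2:
  fixes a b :: real and n :: nat and \<tau> \<omega> :: "nat \<Rightarrow> real"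
  assumes "a < b" and "n \<ge> 1"
    and "gaussian_rule51 a b n \<tau> \<omega>"
  shows "(\<forall>f D. Cm_derivs 6 a b f D \<longrightarrow>
            (\<exists>\<xi>\<in>{a..b}. integral {a..b} f - (\<Sum>k=1..2*n+1. \<omega> k * f (\<tau> k))
               = ((b - a) ^ 7 / 5040 - (1/720) * (\<Sum>k=1..2*n+1. \<omega> k * (\<tau> k - a) ^ 6)) * D 6 \<xi>))
         \<and> (b - a) ^ 7 / 5040 - (1/720) * (\<Sum>k=1..2*n+1. \<omega> k * (\<tau> k - a) ^ 6) > 0"
proof -
  interpret gauss_rule51 a b n \<tau> \<omega>
    using assms by (rule gauss_rule51I)
  show ?thesis
    using quad_error_mean_value_form quad_error_sixth_power_pos
    unfolding quad_error_sixth_power quad_error_def by blast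
qed

end
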